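(* Let $K:\ell^2\to\mathcal{H}$ be a bounded, linear and injective operator into a real Hilbert space $\mathcal{H}$, $f\in\mathcal{H}$, $w=(w_k)$ with $w_k\ge w_0>0$, and $\gamma>0$. For $u\in\ell^2$ let $\mathcal{A}=\{k: |u-\gamma K^*(Ku-f)|_k>\gamma w_k\}$, $\mathcal{I}=\mathbb{N}\setminus\mathcal{A}$, and $\mathcal{G}(u)=\begin{pmatrix}\gamma\mathcal{M}_{\mathcal{A}\mathcal{A}} & \gamma\mathcal{M}_{\mathcal{A}\mathcal{I}}\\ 0 & I_{\mathcal{I}}\end{pmatrix}$ (equivalently $\mathcal{G}(u)=(I-P_{\mathcal{A}})+\gamma P_{\mathcal{A}}K^*K$). Then $\mathcal{G}(u)$ is boundedly invertible from $\ell^2$ onto $\ell^2$, and $$\|\mathcal{G}(u)^{-1}\|\le\|\mathcal{M}_{\mathcal{A}\mathcal{A}}^{-1}\|\big(\tfrac1\gamma+\|\mathcal{M}_{\mathcal{A}\mathcal{I}}\|\big)+1.$$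
   Context: $K^*$ is the Hilbert space adjoint of $K$; $|x|_k$ means $|x_k|$. $P_{\mathcal{B}}$ denotes the coordinate projection onto the indices in $\mathcal{B}\subset\mathbb{N}$, and for index sets $\mathcal{B},\mathcal{C}$, $\mathcal{M}_{\mathcal{B}\mathcal{C}}=P_{\mathcal{B}}K^*K|_{\ell^2(\mathcal{C})}$, viewed as an operator from sequences supported on $\mathcal{C}$ to sequences supported on $\mathcal{B}$; $\mathcal{M}_{\mathcal{A}\mathcal{A}}^{-1}$ is the inverse of $\mathcal{M}_{\mathcal{A}\mathcal{A}}$ on the (finite-dimensional) space of sequences supported on $\mathcal{A}$. *)

theory Defs
  imports "HOL-Analysis.Analysis"
begin

typedef l2 = "{x :: nat \<Rightarrow> real. summable (\<lambda>k. (x k)\<^sup>2)}"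
  morphisms l2_seq Abs_l2
  by (rule exI[of _ "\<lambda>_. 0"]) simp

setup_lifting type_definition_l2

lemma l2_summable_add:
  fixes x y :: "nat \<Rightarrow> real"
  assumes "summable (\<lambda>k. (x k)\<^sup>2)" "summable (\<lambda>k. (y k)\<^sup>2)"
  shows "summable (\<lambda>k. (x k + y k)\<^sup>2)"
proof (rule summable_comparison_test[where g = "\<lambda>k. 2 * (x k)\<^sup>2 + 2 * (y k)\<^sup>2"])
  show "\<exists>N. \<forall>n\<ge>N. norm ((x n + y n)\<^sup>2) \<le> 2 * (x n)\<^sup>2 + 2 * (y n)\<^sup>2"
  proof (intro exI allI impI)
    fix n
    have "0 \<le> (x n - y n)\<^sup>2" by simp
    then have "(x n + y n)\<^sup>2 \<le> 2 * (x n)\<^sup>2 + 2 * (y n)\<^sup>2"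
      by (simp add: power2_eq_square algebra_simps)
    then show "norm ((x n + y n)\<^sup>2) \<le> 2 * (x n)\<^sup>2 + 2 * (y n)\<^sup>2"
      by simp
  qed
  show "summable (\<lambda>k. 2 * (x k)\<^sup>2 + 2 * (y k)\<^sup>2)"
    using assms by (intro summable_add summable_mult)
qed

lemma l2_summable_prod:
  fixes x y :: "nat \<Rightarrow> real"
  assumes "summable (\<lambda>k. (x k)\<^sup>2)" "summable (\<lambda>k. (y k)\<^sup>2)"
  shows "summable (\<lambda>k. x k * y k)"
proof (rule summable_comparison_test[where g = "\<lambda>k. (x k)\<^sup>2 + (y k)\<^sup>2"])
  show "\<exists>N. \<forall>n\<ge>N. norm (x n * y n) \<le> (x n)\<^sup>2 + (y n)\<^sup>2"
  proof (intro exI allI impI)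
    fix n
    have "0 \<le> (\<bar>x n\<bar> - \<bar>y n\<bar>)\<^sup>2" by simp
    then have "2 * (\<bar>x n\<bar> * \<bar>y n\<bar>) \<le> (x n)\<^sup>2 + (y n)\<^sup>2"
      by (simp add: power2_eq_square algebra_simps)
    moreover have "0 \<le> \<bar>x n\<bar> * \<bar>y n\<bar>" by simp
    ultimately have "\<bar>x n\<bar> * \<bar>y n\<bar> \<le> (x n)\<^sup>2 + (y n)\<^sup>2"
      by linarith
    then show "norm (x n * y n) \<le> (x n)\<^sup>2 + (y n)\<^sup>2"
      by (simp add: abs_mult)
  qed
  show "summable (\<lambda>k. (x k)\<^sup>2 + (y k)\<^sup>2)"
    using assms by (intro summable_add)
qed

instantiation l2 :: real_vector
begin

lift_definition zero_l2 :: l2 is "\<lambda>_. 0" by simp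

lift_definition plus_l2 :: "l2 \<Rightarrow> l2 \<Rightarrow> l2" is "\<lambda>x y k. x k + y k"
  by (rule l2_summable_add)

lift_definition uminus_l2 :: "l2 \<Rightarrow> l2" is "\<lambda>x k. - x k" by simp

lift_definition minus_l2 :: "l2 \<Rightarrow> l2 \<Rightarrow> l2" is "\<lambda>x y k. x k - y k"
proof -
  fix x y :: "nat \<Rightarrow> real"
  assume "summable (\<lambda>k. (x k)\<^sup>2)" "summable (\<lambda>k. (y k)\<^sup>2)"
  then have "summable (\<lambda>k. (x k + - y k)\<^sup>2)"
    by (intro l2_summable_add) simp_all
  then show "summable (\<lambda>k. (x k - y k)\<^sup>2)" by simp
qed

lift_definition scaleR_l2 :: "real \<Rightarrow> l2 \<Rightarrow> l2" is "\<lambda>r x k. r * x k"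
  by (simp add: power_mult_distrib summable_mult)

instance
  by standard (transfer; auto simp: algebra_simps)+

end

instantiation l2 :: real_inner
begin

lift_definition inner_l2 :: "l2 \<Rightarrow> l2 \<Rightarrow> real" is "\<lambda>x y. \<Sum>k. x k * y k" .

definition norm_l2 :: "l2 \<Rightarrow> real" where "norm_l2 x = sqrt (inner x x)"

definition sgn_l2 :: "l2 \<Rightarrow> l2" where "sgn_l2 x = x /\<^sub>R norm x"

definition dist_l2 :: "l2 \<Rightarrow> l2 \<Rightarrow> real" where "dist_l2 x y = norm (x - y)"

definition uniformity_l2 :: "(l2 \<times> l2) filter" where
  "uniformity_l2 = (INF e\<in>{0 <..}. principal {(x, y). dist x y < e})"

definition open_l2 :: "l2 set \<Rightarrow> bool" where
  "open_l2 U \<longleftrightarrow> (\<forall>x\<in>U. eventually (\<lambda>(x', y). x' = x \<longrightarrow> y \<in> U) uniformity)"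

instance
proof
  fix x y z :: l2 and r :: real
  show "inner x y = inner y x"
    by transfer (simp add: mult.commute)
  show "inner (x + y) z = inner x z + inner y z"
    by transfer (simp add: distrib_right suminf_add[symmetric] l2_summable_prod)
  show "inner (r *\<^sub>R x) y = r * inner x y"
    by transfer (simp add: mult.assoc suminf_mult l2_summable_prod)
  show "0 \<le> inner x x"
    by transfer (simp add: suminf_nonneg l2_summable_prod)
  show "(inner x x = 0) = (x = 0)"
  proof transfer
    fix x :: "nat \<Rightarrow> real"
    assume "summable (\<lambda>k. (x k)\<^sup>2)"
    then have "summable (\<lambda>k. x k * x k)" by (simp add: power2_eq_square)
    then show "((\<Sum>k. x k * x k) = 0) = (x = (\<lambda>_. 0))"
      by (simp add: suminf_eq_zero_iff fun_eq_iff)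
  qed
  show "norm x = sqrt (inner x x)" by (rule norm_l2_def)
qed (rule sgn_l2_def dist_l2_def open_l2_def uniformity_l2_def)+

end

definition coord :: "l2 \<Rightarrow> nat \<Rightarrow> real" where
  "coord x k = l2_seq x k"

lift_definition proj :: "nat set \<Rightarrow> l2 \<Rightarrow> l2" is
  "\<lambda>B x k. if k \<in> B then x k else 0"
proof -
  fix B and x :: "nat \<Rightarrow> real"
  assume s: "summable (\<lambda>k. (x k)\<^sup>2)"
  show "summable (\<lambda>k. (if k \<in> B then x k else 0)\<^sup>2)"
    by (rule summable_comparison_test[OF _ s]) auto
qed

definition supported_on :: "nat set \<Rightarrow> l2 set" where
  "supported_on C = {x. \<forall>k. k \<notin> C \<longrightarrow> coord x k = 0}"

text \<open>The block M_BC = P_B K*K restricted to l2(C), extended by zero on the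
  complement of l2(C) (i.e. precomposed with P_C); its operator norm equals the norm of
  the restricted operator l2(C) -> l2(B).\<close>
definition Mblock :: "(l2 \<Rightarrow> 'h::real_inner) \<Rightarrow> nat set \<Rightarrow> nat set \<Rightarrow> l2 \<Rightarrow> l2" where
  "Mblock K B C = (\<lambda>x. proj B (adjoint K (K (proj C x))))"

text \<open>The inverse of M_AA on l2(A), extended by zero on the complement (precomposed
  with P_A).\<close>
definition MAAinv :: "(l2 \<Rightarrow> 'h::real_inner) \<Rightarrow> nat set \<Rightarrow> l2 \<Rightarrow> l2" where
  "MAAinv K A = (\<lambda>y. inv_into (supported_on A) (Mblock K A A) (proj A y))"

end

theory Submission
  imports Defs
begin

text \<open>The coordinates of an \<open>\<ell>\<^sup>2\<close> sequence tend to zero and \<open>w \<ge> w\<^sub>0 > 0\<close>, so the active set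
  \<open>\<A>\<close> is finite. On the finite-dimensional space \<open>\<ell>\<^sup>2(\<A>)\<close> the block \<open>M\<^sub>\<A>\<^sub>\<A> = P\<^sub>\<A>K\<^sup>*K\<close>
  satisfies \<open>\<langle>x, M\<^sub>\<A>\<^sub>\<A>x\<rangle> = \<parallel>Kx\<parallel>\<^sup>2\<close>, hence is injective because \<open>K\<close> is, and therefore
  bijective. As \<open>G(u)\<close> is block upper triangular with diagonal blocks \<open>\<gamma>M\<^sub>\<A>\<^sub>\<A>\<close> and \<open>I\<close>, its
  inverse is \<open>y \<mapsto> M\<^sub>\<A>\<^sub>\<A>\<^sup>-\<^sup>1(y/\<gamma> - M\<^sub>\<A>\<^sub>\<I>y) + P\<^sub>\<I>y\<close>, and the norm bound is the triangle
  inequality applied to this formula.\<close>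

lemma l2_eqI: "(\<And>k. coord x k = coord y k) \<Longrightarrow> x = y"
  unfolding coord_def by (metis l2_seq_inject ext)

lemma coord_add [simp]: "coord (x + y) k = coord x k + coord y k"
  unfolding coord_def by transfer simp

lemma coord_diff [simp]: "coord (x - y) k = coord x k - coord y k"
  unfolding coord_def by transfer simp

lemma coord_scaleR [simp]: "coord (r *\<^sub>R x) k = r * coord x k"
  unfolding coord_def by transfer simp

lemma coord_zero [simp]: "coord 0 k = 0"
  unfolding coord_def by transfer simp

lemma coord_proj [simp]: "coord (proj B x) k = (if k \<in> B then coord x k else 0)"
  unfolding coord_def by transfer simp

lemma coord_sum: "coord (sum f S) k = (\<Sum>i\<in>S. coord (f i) k)"
  by (induction S rule: infinite_finite_induct) auto

lemma summable_coord_square: "summable (\<lambda>k. (coord x k)\<^sup>2)"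
  unfolding coord_def using l2_seq by simp

lemma summable_coord_mult: "summable (\<lambda>k. coord x k * coord y k)"
  by (rule l2_summable_prod[OF summable_coord_square summable_coord_square])

lemma inner_l2_eq_suminf: "x \<bullet> y = (\<Sum>k. coord x k * coord y k)"
  unfolding coord_def by transfer simp

lift_definition l2_unit :: "nat \<Rightarrow> l2" is "\<lambda>j k. if k = j then 1 else 0"
  by (rule summable_finite[of "{j}" for j]) auto

lemma coord_l2_unit [simp]: "coord (l2_unit j) k = (if k = j then 1 else 0)"
  unfolding coord_def by transfer simp

lemma inner_l2_unit_right: "x \<bullet> l2_unit j = coord x j"
proof -
  have "(\<lambda>k. coord x k * coord (l2_unit j) k) = (\<lambda>k. if k = j then coord x k else 0)"
    by auto
  then show ?thesis
    unfolding inner_l2_eq_suminf using sums_single[of j "coord x"] sums_unique by metis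
qed

lemma norm_l2_unit [simp]: "norm (l2_unit j) = 1"
  unfolding norm_eq_sqrt_inner inner_l2_unit_right by simp

lemma abs_coord_le_norm: "\<bar>coord x j\<bar> \<le> norm x"
  using Cauchy_Schwarz_ineq2[of x "l2_unit j"] by (simp add: inner_l2_unit_right)

lemma proj_add: "proj B (x + y) = proj B x + proj B y"
  by (rule l2_eqI) simp

lemma proj_diff: "proj B (x - y) = proj B x - proj B y"
  by (rule l2_eqI) simp

lemma proj_scaleR: "proj B (r *\<^sub>R x) = r *\<^sub>R proj B x"
  by (rule l2_eqI) simp

lemma proj_proj [simp]: "proj B (proj C x) = proj (B \<inter> C) x"
  by (rule l2_eqI) simp

lemma proj_zero [simp]: "proj B 0 = 0"
  by (rule l2_eqI) simp

lemma proj_empty [simp]: "proj {} x = 0"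
  by (rule l2_eqI) simp

lemma proj_Diff_UNIV: "proj (UNIV - B) x = x - proj B x"
  by (rule l2_eqI) simp

lemma inner_proj_left: "proj B x \<bullet> y = x \<bullet> proj B y"
  unfolding inner_l2_eq_suminf by (rule arg_cong[where f = suminf]) auto

lemma norm_proj_le: "norm (proj B x) \<le> norm x"
proof -
  have "proj B x \<bullet> proj B x \<le> x \<bullet> x"
    unfolding inner_l2_eq_suminf
    by (rule suminf_le[OF _ summable_coord_mult summable_coord_mult]) auto
  then show ?thesis by (simp add: norm_le)
qed

lemma bounded_linear_proj: "bounded_linear (proj B)"
  by (rule bounded_linear_intro[where K = 1]) (auto simp: proj_add proj_scaleR norm_proj_le)

lemma proj_eq_sum_l2_unit: "finite A \<Longrightarrow> proj A x = (\<Sum>k\<in>A. coord x k *\<^sub>R l2_unit k)"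
  by (rule l2_eqI) (simp add: coord_sum if_distrib cong: if_cong)

lemma LIMSEQ_proj_lessThan: "(\<lambda>N. proj {..<N} x) \<longlonglongrightarrow> x"
proof -
  have tail: "(norm (x - proj {..<N} x))\<^sup>2 = x \<bullet> x - (\<Sum>k<N. coord x k * coord x k)" for N
  proof -
    have fin: "summable (\<lambda>k. if k < N then coord x k * coord x k else 0)"
      by (rule summable_finite[of "{..<N}"]) auto
    have "(norm (x - proj {..<N} x))\<^sup>2 = (\<Sum>k. coord x k * coord x k - (if k < N then coord x k * coord x k else 0))"
      unfolding power2_norm_eq_inner inner_l2_eq_suminf by (rule arg_cong[where f = suminf]) auto
    also have "\<dots> = x \<bullet> x - (\<Sum>k. if k < N then coord x k * coord x k else 0)"
      unfolding inner_l2_eq_suminf by (rule suminf_diff[OF summable_coord_mult fin, symmetric])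
    also have "(\<Sum>k. if k < N then coord x k * coord x k else 0) = (\<Sum>k<N. coord x k * coord x k)"
      by (subst suminf_finite[of "{..<N}"]) auto
    finally show ?thesis .
  qed
  have "(\<lambda>N. x \<bullet> x - (\<Sum>k<N. coord x k * coord x k)) \<longlonglongrightarrow> x \<bullet> x - x \<bullet> x"
    unfolding inner_l2_eq_suminf by (intro tendsto_intros summable_LIMSEQ[OF summable_coord_mult])
  then have "(\<lambda>N. (norm (x - proj {..<N} x))\<^sup>2) \<longlonglongrightarrow> 0"
    by (simp add: tail)
  then have "(\<lambda>N. norm (x - proj {..<N} x)) \<longlonglongrightarrow> 0"
    using tendsto_real_sqrt by fastforce
  then have "(\<lambda>N. x - proj {..<N} x) \<longlonglongrightarrow> 0"
    by (simp add: tendsto_norm_zero_iff)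
  from tendsto_diff[OF tendsto_const[of x] this] show ?thesis by simp
qed

section \<open>The adjoint of a bounded operator on \<open>\<ell>\<^sup>2\<close>\<close>

lemma le_square_if_le_mult_sqrt:
  fixes S c :: real
  assumes "0 \<le> S" "S \<le> c * sqrt S"
  shows "S \<le> c\<^sup>2"
proof (cases "S = 0")
  case False
  then have "sqrt S * sqrt S \<le> c * sqrt S" and "sqrt S > 0"
    using assms by simp_all
  then have "sqrt S \<le> c" by (rule mult_right_le_imp_le)
  then have "(sqrt S)\<^sup>2 \<le> c\<^sup>2" using assms(1) by (intro power_mono) simp_all
  then show ?thesis using assms by simp
qed simp

text \<open>The library's \<open>adjoint\<close> is defined by choice, so it must be shown to exist. It is the
  sequence of coefficients \<open>\<langle>K e\<^sub>k, y\<rangle>\<close>; it lies in \<open>\<ell>\<^sup>2\<close> because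
  testing \<open>K\<close> on the truncation \<open>v\<close> of that sequence gives \<open>\<parallel>v\<parallel>\<^sup>2 \<le> \<parallel>K\<parallel> \<parallel>v\<parallel> \<parallel>y\<parallel>\<close>.\<close>
lemma adjoint_l2_exists:
  fixes K :: "l2 \<Rightarrow> 'h::real_inner"
  assumes "bounded_linear K"
  shows "\<exists>K'. \<forall>x y. K x \<bullet> y = x \<bullet> K' y"
proof -
  interpret K: bounded_linear K by fact
  obtain B where B: "\<And>x. norm (K x) \<le> norm x * B" using K.bounded by blast
  have summable: "summable (\<lambda>k. (K (l2_unit k) \<bullet> y)\<^sup>2)" for y
  proof (rule summableI_nonneg_bounded)
    fix N
    define a where "a k = K (l2_unit k) \<bullet> y" for k
    define v where "v = (\<Sum>k<N. a k *\<^sub>R l2_unit k)"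
    have coord_v: "coord v j = (if j < N then a j else 0)" for j
      unfolding v_def coord_sum by (simp add: if_distrib cong: if_cong)
    have "v \<bullet> v = (\<Sum>k<N. a k * (v \<bullet> l2_unit k))"
      by (subst (1) v_def) (simp add: inner_sum_right)
    also have "\<dots> = (\<Sum>k<N. (a k)\<^sup>2)"
      by (simp add: inner_l2_unit_right coord_v power2_eq_square)
    finally have "v \<bullet> v = (\<Sum>k<N. (a k)\<^sup>2)" .
    moreover have "K v \<bullet> y = (\<Sum>k<N. (a k)\<^sup>2)"
      unfolding v_def K.sum K.scaleR inner_sum_left by (simp add: a_def power2_eq_square)
    ultimately have "(\<Sum>k<N. (a k)\<^sup>2) \<le> (B * norm y) * sqrt (\<Sum>k<N. (a k)\<^sup>2)"
      using Cauchy_Schwarz_ineq2[of "K v" y] mult_right_mono[OF B[of v], of "norm y"]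
      by (simp add: norm_eq_sqrt_inner mult_ac)
    then show "(\<Sum>k<N. (K (l2_unit k) \<bullet> y)\<^sup>2) \<le> (B * norm y)\<^sup>2"
      unfolding a_def by (intro le_square_if_le_mult_sqrt) (auto intro: sum_nonneg)
  qed simp
  define K' where "K' y = Abs_l2 (\<lambda>k. K (l2_unit k) \<bullet> y)" for y
  have coord_K': "coord (K' y) k = K (l2_unit k) \<bullet> y" for y k
    unfolding K'_def coord_def using summable[of y] by (simp add: Abs_l2_inverse)
  have "K x \<bullet> y = x \<bullet> K' y" for x y
  proof -
    have partial: "(\<Sum>k<N. coord x k * coord (K' y) k) = K (proj {..<N} x) \<bullet> y" for N
      unfolding proj_eq_sum_l2_unit[OF finite_lessThan] K.sum K.scaleR inner_sum_left coord_K'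
      by simp
    have "(\<lambda>N. \<Sum>k<N. coord x k * coord (K' y) k) \<longlonglongrightarrow> x \<bullet> K' y"
      unfolding inner_l2_eq_suminf by (rule summable_LIMSEQ[OF summable_coord_mult])
    moreover have "(\<lambda>N. K (proj {..<N} x) \<bullet> y) \<longlonglongrightarrow> K x \<bullet> y"
      by (intro tendsto_intros K.tendsto LIMSEQ_proj_lessThan)
    ultimately show ?thesis unfolding partial using LIMSEQ_unique by metis
  qed
  then show ?thesis by blast
qed

lemma inner_adjoint_l2:
  fixes K :: "l2 \<Rightarrow> 'h::real_inner"
  assumes "bounded_linear K"
  shows "K x \<bullet> y = x \<bullet> adjoint K y"
  using someI_ex[OF adjoint_l2_exists[OF assms]] unfolding adjoint_def by blast

lemma bounded_linear_adjoint_l2: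
  fixes K :: "l2 \<Rightarrow> 'h::real_inner"
  assumes "bounded_linear K"
  shows "bounded_linear (adjoint K)"
proof -
  interpret K: bounded_linear K by fact
  obtain B where B: "\<And>x. norm (K x) \<le> norm x * B" and "B \<ge> 0"
    using K.nonneg_bounded by blast
  note adj = inner_adjoint_l2[OF assms]
  show ?thesis
  proof (rule bounded_linear_intro[where K = B])
    show "adjoint K (a + b) = adjoint K a + adjoint K b" for a b
      by (rule vector_eq_ldot[THEN iffD1]) (simp add: adj[symmetric] inner_add_right)
    show "adjoint K (r *\<^sub>R a) = r *\<^sub>R adjoint K a" for r a
      by (rule vector_eq_ldot[THEN iffD1]) (simp add: adj[symmetric])
    fix y
    let ?z = "adjoint K y"
    have "norm ?z * norm ?z = K ?z \<bullet> y" by (simp add: adj dot_square_norm power2_eq_square)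
    also have "\<dots> \<le> norm (K ?z) * norm y" by (rule Cauchy_Schwarz_ineq2[THEN abs_le_D1])
    also have "\<dots> \<le> norm ?z * (B * norm y)" using mult_right_mono[OF B[of ?z] norm_ge_zero[of y]] by (simp add: mult_ac)
    finally show "norm ?z \<le> norm y * B"
      using \<open>B \<ge> 0\<close> by (cases "norm ?z = 0") (auto simp: mult.commute intro: mult_left_le_imp_le)
  qed
qed

lemma finite_coords_above:
  fixes w :: "nat \<Rightarrow> real"
  assumes "c > 0" "w0 > 0" "\<And>k. w k \<ge> w0"
  shows "finite {k. \<bar>coord v k\<bar> > c * w k}"
proof -
  have "(\<lambda>k. \<bar>coord v k\<bar>) \<longlonglongrightarrow> 0"
    using tendsto_real_sqrt[OF summable_LIMSEQ_zero[OF summable_coord_square[of v]]] by simp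
  moreover have "c * w0 > 0" using assms by simp
  ultimately have "eventually (\<lambda>k. \<bar>coord v k\<bar> < c * w0) sequentially"
    by (rule order_tendstoD)
  then obtain N where N: "\<And>k. k \<ge> N \<Longrightarrow> \<bar>coord v k\<bar> < c * w0"
    unfolding eventually_sequentially by blast
  have "k < N" if "\<bar>coord v k\<bar> > c * w k" for k
  proof (rule ccontr)
    assume "\<not> k < N"
    then have "\<bar>coord v k\<bar> < c * w0" by (simp add: N)
    moreover have "c * w0 \<le> c * w k" using assms by simp
    ultimately show False using that by simp
  qed
  then have "{k. \<bar>coord v k\<bar> > c * w k} \<subseteq> {..<N}" by blast
  then show ?thesis by (rule finite_subset) simp
qed

lemma supported_on_iff_proj: "x \<in> supported_on A \<longleftrightarrow> proj A x = x"
proof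
  show "proj A x = x" if "x \<in> supported_on A"
    using that by (intro l2_eqI) (auto simp: supported_on_def)
  show "x \<in> supported_on A" if "proj A x = x"
    unfolding supported_on_def
  proof (intro CollectI allI impI)
    fix k assume "k \<notin> A"
    then show "coord x k = 0" using coord_proj[of A x k] that by simp
  qed
qed

lemma subspace_supported_on: "subspace (supported_on A)"
  unfolding subspace_def by (simp add: supported_on_def)

lemma supported_on_subset_span: "finite A \<Longrightarrow> supported_on A \<subseteq> span (l2_unit ` A)"
proof
  fix x assume "finite A" "x \<in> supported_on A"
  then have "x = (\<Sum>k\<in>A. coord x k *\<^sub>R l2_unit k)"
    by (simp add: supported_on_iff_proj flip: proj_eq_sum_l2_unit)
  also have "\<dots> \<in> span (l2_unit ` A)"
    by (intro span_sum span_scale span_base) simp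
  finally show "x \<in> span (l2_unit ` A)" .
qed

lemma bounded_linear_Mblock: "bounded_linear K \<Longrightarrow> bounded_linear (Mblock K B C)"
  unfolding Mblock_def
  by (intro bounded_linear_compose[OF bounded_linear_proj] bounded_linear_compose[OF bounded_linear_adjoint_l2]
      bounded_linear_compose[OF _ bounded_linear_proj])

lemma Mblock_in_supported_on: "Mblock K A C x \<in> supported_on A"
  unfolding Mblock_def supported_on_iff_proj by simp

text \<open>Injectivity comes from \<open>\<langle>x, M\<^sub>A\<^sub>A x\<rangle> = \<parallel>K x\<parallel>\<^sup>2\<close> for \<open>x\<close> supported on \<open>A\<close>.\<close>
lemma inj_on_Mblock_diag:
  fixes K :: "l2 \<Rightarrow> 'h::real_inner"
  assumes "bounded_linear K" and "inj K"
  shows "inj_on (Mblock K A A) (supported_on A)"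
proof (rule inj_onI)
  interpret K: bounded_linear K by fact
  interpret M: bounded_linear "Mblock K A A" by (rule bounded_linear_Mblock[OF assms(1)])
  fix x y assume "x \<in> supported_on A" "y \<in> supported_on A" "Mblock K A A x = Mblock K A A y"
  then have z: "proj A (x - y) = x - y" and "Mblock K A A (x - y) = 0"
    by (simp_all add: proj_diff supported_on_iff_proj M.diff)
  then have "0 = (x - y) \<bullet> Mblock K A A (x - y)" by simp
  also have "\<dots> = K (x - y) \<bullet> K (x - y)"
    unfolding Mblock_def z inner_commute[of "x - y"] inner_proj_left inner_adjoint_l2[OF assms(1)]
    by (simp add: z inner_commute)
  finally have "K (x - y) = K 0" by (simp add: K.zero)
  then have "x - y = 0" by (rule injD[OF \<open>inj K\<close>])
  then show "x = y" by simp
qed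

lemma Mblock_diag_image:
  fixes K :: "l2 \<Rightarrow> 'h::real_inner"
  assumes "bounded_linear K" and "inj K" and "finite A"
  shows "Mblock K A A ` supported_on A = supported_on A"
proof
  let ?M = "Mblock K A A" and ?S = "supported_on A"
  have lin: "linear ?M" using bounded_linear_Mblock[OF assms(1)] bounded_linear.linear by blast
  show "?M ` ?S \<subseteq> ?S" using Mblock_in_supported_on by blast
  obtain B where B: "B \<subseteq> ?S" "independent B" "?S \<subseteq> span B"
    by (rule basis_exists)
  have span_B: "span B \<subseteq> ?S" by (rule span_minimal[OF B(1) subspace_supported_on])
  have inj: "inj_on ?M (span B)"
    by (rule inj_on_subset[OF inj_on_Mblock_diag[OF assms(1,2)] span_B])
  have "finite B"
    using independent_span_bound[OF finite_imageI[OF assms(3)] B(2)]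
      order_trans[OF B(1) supported_on_subset_span[OF assms(3)]] by simp
  have image_B: "?M ` B \<subseteq> ?S" using Mblock_in_supported_on by blast
  have indep: "independent (?M ` B)" by (rule linear_independent_injective_image[OF lin B(2) inj])
  have "b \<in> span (?M ` B)" if "b \<in> ?S" for b
  proof (rule ccontr)
    assume b: "b \<notin> span (?M ` B)"
    then have "b \<notin> ?M ` B" by (auto intro: span_base)
    then have "card (insert b (?M ` B)) = card B + 1"
      using \<open>finite B\<close> card_image[OF inj_on_subset[OF inj span_superset]] by simp
    moreover have "insert b (?M ` B) \<subseteq> span B" using that image_B B(3) by auto
    then have "card (insert b (?M ` B)) \<le> card B"
      using independent_span_bound[OF \<open>finite B\<close> independent_insertI[OF b indep]] by simp
    ultimately show False by simp
  qed
  then have "?S \<subseteq> span (?M ` B)" by blast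
  also have "\<dots> = ?M ` span B" by (rule linear_span_image[OF lin])
  finally show "?S \<subseteq> ?M ` ?S" using image_mono[OF span_B] by (rule order_trans)
qed

lemma MAAinv_proj [simp]: "MAAinv K A (proj A y) = MAAinv K A y"
  unfolding MAAinv_def by simp

context
  fixes K :: "l2 \<Rightarrow> 'h::real_inner" and A :: "nat set"
  assumes bl: "bounded_linear K" and inj: "inj K" and fin: "finite A"
begin

private lemma proj_in_Mblock_image: "proj A y \<in> Mblock K A A ` supported_on A"
  unfolding Mblock_diag_image[OF bl inj fin] supported_on_iff_proj by simp

lemma MAAinv_in_supported_on: "MAAinv K A y \<in> supported_on A"
  unfolding MAAinv_def by (rule inv_into_into[OF proj_in_Mblock_image])

lemma proj_MAAinv [simp]: "proj A (MAAinv K A y) = MAAinv K A y"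
  using MAAinv_in_supported_on supported_on_iff_proj by blast

lemma Mblock_MAAinv: "Mblock K A A (MAAinv K A y) = proj A y"
  unfolding MAAinv_def by (rule f_inv_into_f[OF proj_in_Mblock_image])

lemma MAAinv_Mblock:
  assumes "x \<in> supported_on A"
  shows "MAAinv K A (Mblock K A A x) = x"
proof -
  have "proj A (Mblock K A A x) = Mblock K A A x"
    using Mblock_in_supported_on[of K A A x] unfolding supported_on_iff_proj .
  then show ?thesis
    unfolding MAAinv_def using inv_into_f_f[OF inj_on_Mblock_diag[OF bl inj] assms] by simp
qed

lemma linear_MAAinv: "linear (MAAinv K A)"
proof (rule linearI)
  let ?M = "Mblock K A A" and ?g = "MAAinv K A" and ?S = "supported_on A"
  interpret M: bounded_linear ?M by (rule bounded_linear_Mblock[OF bl])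
  fix a b :: l2 and r :: real
  have "?g a + ?g b \<in> ?S"
    by (intro subspace_add[OF subspace_supported_on] MAAinv_in_supported_on)
  then have "?g a + ?g b = ?g (?M (?g a + ?g b))" by (rule MAAinv_Mblock[symmetric])
  also have "?M (?g a + ?g b) = proj A (a + b)" by (simp add: M.add Mblock_MAAinv proj_add)
  finally show "?g (a + b) = ?g a + ?g b" by simp
  have "r *\<^sub>R ?g a \<in> ?S"
    by (intro subspace_scale[OF subspace_supported_on] MAAinv_in_supported_on)
  then have "r *\<^sub>R ?g a = ?g (?M (r *\<^sub>R ?g a))" by (rule MAAinv_Mblock[symmetric])
  also have "?M (r *\<^sub>R ?g a) = proj A (r *\<^sub>R a)" by (simp add: M.scaleR Mblock_MAAinv proj_scaleR)
  finally show "?g (r *\<^sub>R a) = r *\<^sub>R ?g a" by simp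
qed

end

lemma bounded_linear_factor_proj_finite:
  fixes g :: "l2 \<Rightarrow> 'a::real_normed_vector"
  assumes "linear g" and "finite A" and "\<And>y. g (proj A y) = g y"
  shows "bounded_linear g"
proof -
  interpret g: linear g by fact
  show ?thesis
  proof (rule bounded_linear_intro[OF g.add g.scaleR])
    fix y
    have "norm (g y) = norm (\<Sum>k\<in>A. coord y k *\<^sub>R g (l2_unit k))"
      using assms(3)[of y] by (simp add: proj_eq_sum_l2_unit[OF assms(2)] g.sum g.scaleR)
    also have "\<dots> \<le> (\<Sum>k\<in>A. norm y * norm (g (l2_unit k)))"
      by (intro order_trans[OF norm_sum] sum_mono) (simp add: mult_right_mono abs_coord_le_norm)
    finally show "norm (g y) \<le> norm y * (\<Sum>k\<in>A. norm (g (l2_unit k)))"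
      by (simp add: sum_distrib_left)
  qed
qed

lemma bounded_linear_MAAinv:
  "bounded_linear K \<Longrightarrow> inj K \<Longrightarrow> finite A \<Longrightarrow> bounded_linear (MAAinv K A)"
  by (rule bounded_linear_factor_proj_finite[OF linear_MAAinv _ MAAinv_proj])

section \<open>Inverting the block-triangular operator\<close>

definition block_operator :: "(l2 \<Rightarrow> 'h::real_inner) \<Rightarrow> nat set \<Rightarrow> real \<Rightarrow> l2 \<Rightarrow> l2" where
  "block_operator K A \<gamma> x = (x - proj A x) + \<gamma> *\<^sub>R proj A (adjoint K (K x))"

definition block_inverse :: "(l2 \<Rightarrow> 'h::real_inner) \<Rightarrow> nat set \<Rightarrow> real \<Rightarrow> l2 \<Rightarrow> l2" where
  "block_inverse K A \<gamma> y =
     MAAinv K A ((1 / \<gamma>) *\<^sub>R y - Mblock K A (UNIV - A) y) + proj (UNIV - A) y"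

context
  fixes K :: "l2 \<Rightarrow> 'h::real_inner" and A :: "nat set" and \<gamma> :: real
  assumes bl: "bounded_linear K" and inj: "inj K" and fin: "finite A" and pos: "\<gamma> > 0"
begin

private lemma linear_adjoint_comp: "linear (\<lambda>x. adjoint K (K x))"
  using bounded_linear_compose[OF bounded_linear_adjoint_l2[OF bl] bl] bounded_linear.linear
  by blast

private lemma proj_adjoint_diff:
  "proj A (adjoint K (K (x - y))) = proj A (adjoint K (K x)) - proj A (adjoint K (K y))"
  using linear_diff[OF linear_adjoint_comp] by (simp add: proj_diff)

private lemma proj_adjoint_add:
  "proj A (adjoint K (K (x + y))) = proj A (adjoint K (K x)) + proj A (adjoint K (K y))"
  using linear_add[OF linear_adjoint_comp] by (simp add: proj_add)

lemma block_inverse_left: "block_inverse K A \<gamma> (block_operator K A \<gamma> x) = x"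
proof -
  let ?y = "block_operator K A \<gamma> x"
  have "proj (UNIV - A) ?y = x - proj A x"
    unfolding block_operator_def by (rule l2_eqI) simp
  moreover have "proj A ((1 / \<gamma>) *\<^sub>R ?y - Mblock K A (UNIV - A) ?y) = Mblock K A A (proj A x)"
  proof -
    have "proj A ((1 / \<gamma>) *\<^sub>R ?y) = proj A (adjoint K (K x))"
      unfolding block_operator_def using pos by (simp add: proj_add proj_diff proj_scaleR)
    moreover have "Mblock K A (UNIV - A) ?y = proj A (adjoint K (K (x - proj A x)))"
      using \<open>proj (UNIV - A) ?y = x - proj A x\<close> by (simp add: Mblock_def)
    ultimately show ?thesis
      by (simp add: proj_diff proj_adjoint_diff Mblock_def)
  qed
  ultimately have "block_inverse K A \<gamma> ?y = MAAinv K A (Mblock K A A (proj A x)) + (x - proj A x)"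
    unfolding block_inverse_def by (metis MAAinv_proj)
  also have "\<dots> = x"
    using MAAinv_Mblock[OF bl inj fin] supported_on_iff_proj by simp
  finally show ?thesis .
qed

lemma block_inverse_right: "block_operator K A \<gamma> (block_inverse K A \<gamma> y) = y"
proof -
  let ?z = "MAAinv K A ((1 / \<gamma>) *\<^sub>R y - Mblock K A (UNIV - A) y)"
  have z: "proj A ?z = ?z" by (rule proj_MAAinv[OF bl inj fin])
  have "proj A (adjoint K (K (block_inverse K A \<gamma> y)))
      = Mblock K A A ?z + Mblock K A (UNIV - A) y"
    unfolding block_inverse_def proj_adjoint_add by (simp add: Mblock_def proj_MAAinv[OF bl inj fin])
  also have "\<dots> = (1 / \<gamma>) *\<^sub>R proj A y"
    unfolding Mblock_MAAinv[OF bl inj fin] by (simp add: proj_diff proj_scaleR Mblock_def)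
  finally have "proj A (adjoint K (K (block_inverse K A \<gamma> y))) = (1 / \<gamma>) *\<^sub>R proj A y" .
  moreover have "block_inverse K A \<gamma> y - proj A (block_inverse K A \<gamma> y) = proj (UNIV - A) y"
    unfolding block_inverse_def by (simp add: proj_add z)
  ultimately show ?thesis
    unfolding block_operator_def using pos by (simp add: proj_Diff_UNIV)
qed

lemma bounded_linear_block_inverse: "bounded_linear (block_inverse K A \<gamma>)"
  unfolding block_inverse_def[abs_def]
  by (intro bounded_linear_add bounded_linear_compose[OF bounded_linear_MAAinv[OF bl inj fin]]
      bounded_linear_sub bounded_linear_scaleR_right bounded_linear_ident
      bounded_linear_Mblock[OF bl] bounded_linear_proj)

lemma onorm_block_inverse_le:
  "onorm (block_inverse K A \<gamma>) \<le> onorm (MAAinv K A) * (1 / \<gamma> + onorm (Mblock K A (UNIV - A))) + 1"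
proof (rule onorm_bound)
  let ?Mi = "MAAinv K A" and ?Mb = "Mblock K A (UNIV - A)"
  have Mi: "bounded_linear ?Mi" by (rule bounded_linear_MAAinv[OF bl inj fin])
  have Mb: "bounded_linear ?Mb" by (rule bounded_linear_Mblock[OF bl])
  show "0 \<le> onorm ?Mi * (1 / \<gamma> + onorm ?Mb) + 1"
    using onorm_pos_le[OF Mi] onorm_pos_le[OF Mb] pos by simp
  fix y
  have "norm ((1 / \<gamma>) *\<^sub>R y - ?Mb y) \<le> (1 / \<gamma>) * norm y + onorm ?Mb * norm y"
    using norm_triangle_ineq4[of "(1 / \<gamma>) *\<^sub>R y" "?Mb y"] onorm[OF Mb, of y] pos by simp
  then have "onorm ?Mi * norm ((1 / \<gamma>) *\<^sub>R y - ?Mb y) \<le> onorm ?Mi * ((1 / \<gamma> + onorm ?Mb) * norm y)"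
    using onorm_pos_le[OF Mi] by (intro mult_left_mono) (simp_all add: algebra_simps)
  then have Mi_bound: "norm (?Mi ((1 / \<gamma>) *\<^sub>R y - ?Mb y)) \<le> onorm ?Mi * ((1 / \<gamma> + onorm ?Mb) * norm y)"
    using onorm[OF Mi] by (rule order_trans[rotated])
  have "norm (block_inverse K A \<gamma> y) \<le> norm (?Mi ((1 / \<gamma>) *\<^sub>R y - ?Mb y)) + norm (proj (UNIV - A) y)"
    unfolding block_inverse_def by (rule norm_triangle_ineq)
  also have "\<dots> \<le> onorm ?Mi * ((1 / \<gamma> + onorm ?Mb) * norm y) + norm y"
    using Mi_bound norm_proj_le by (rule add_mono)
  also have "\<dots> = (onorm ?Mi * (1 / \<gamma> + onorm ?Mb) + 1) * norm y"
    by (simp add: algebra_simps)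
  finally show "norm (block_inverse K A \<gamma> y) \<le> (onorm ?Mi * (1 / \<gamma> + onorm ?Mb) + 1) * norm y" .
qed

end

theorem proposition3p11:
  fixes K :: "l2 \<Rightarrow> 'h::{real_inner, complete_space}"
    and f :: 'h and w :: "nat \<Rightarrow> real" and w0 \<gamma> :: real and u :: l2
  assumes "bounded_linear K" and "inj K"
    and "w0 > 0" and "\<And>k. w k \<ge> w0"
    and "\<gamma> > 0"
  defines "\<A> \<equiv> {k. \<bar>coord (u - \<gamma> *\<^sub>R adjoint K (K u - f)) k\<bar> > \<gamma> * w k}"
  defines "\<I> \<equiv> UNIV - \<A>"
  defines "G \<equiv> (\<lambda>x. (x - proj \<A> x) + \<gamma> *\<^sub>R proj \<A> (adjoint K (K x)))"
  shows "\<exists>Ginv. bounded_linear Ginv \<and> (\<forall>x. Ginv (G x) = x) \<and> (\<forall>y. G (Ginv y) = y)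
     \<and> onorm Ginv \<le> onorm (MAAinv K \<A>) * (1 / \<gamma> + onorm (Mblock K \<A> \<I>)) + 1"
proof -
  have "finite \<A>"
    unfolding \<A>_def using assms(5,3,4) by (rule finite_coords_above)
  note block = assms(1,2) this assms(5)
  have "G = block_operator K \<A> \<gamma>"
    unfolding G_def block_operator_def ..
  then show ?thesis
    unfolding \<I>_def
    using bounded_linear_block_inverse[OF block] block_inverse_left[OF block]
      block_inverse_right[OF block] onorm_block_inverse_le[OF block]
    by blast
qed

end
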